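(* Let $(G,\sigma)$ be a colored planar, color-connected graph with vertices $s,t$ connected in $G$, and let $C\subseteq[m]$ be a set of colors. Then $C$ is a color-hitting set if and only if there exists an $s$-$t$ path $\pi$ in $G$ with $\sigma(\pi)\subseteq C$.
   Context: $G=(V,E)$ is a finite undirected graph and $\sigma:V\to 2^{[m]}$; for a path $\pi$, $\sigma(\pi)=\bigcup_{v\in\pi}\sigma(v)$. Color-connected means for each color $c$ the vertices whose color set contains $c$ induce a connected subgraph. For $C\subseteq[m]$, $V(C)=\{v:\sigma(v)\cap C\ne\emptyset\}$. $S\subseteq[m]$ is an $s$-$t$ color separator if $s$ and $t$ are disconnected in $G-V(S)$ (i.e. no $s$-$t$ path avoids $V(S)$). $C$ is a color-hitting set if $C\cap S\neq\emptyset$ for every $s$-$t$ color separator $S$. *)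

theory Defs
  imports "Graph_Theory.Graph_Theory"
begin

text \<open>Undirected finite graphs are represented as symmetric, loop-free pair digraphs
  (locale pair_graph of the AFP entry Graph_Theory).\<close>

definition colors_of_path :: "('a \<Rightarrow> nat set) \<Rightarrow> 'a list \<Rightarrow> nat set" where
  "colors_of_path \<sigma> p = (\<Union>v\<in>set p. \<sigma> v)"

definition color_class :: "'a pair_pre_digraph \<Rightarrow> ('a \<Rightarrow> nat set) \<Rightarrow> nat \<Rightarrow> 'a set" where
  "color_class G \<sigma> c = {v \<in> pverts G. c \<in> \<sigma> v}"

text \<open>Each color class induces a connected subgraph (the empty class counts as connected).\<close>
definition color_connected :: "'a pair_pre_digraph \<Rightarrow> ('a \<Rightarrow> nat set) \<Rightarrow> nat \<Rightarrow> bool" where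
  "color_connected G \<sigma> m \<longleftrightarrow>
     (\<forall>c\<in>{1..m}. \<forall>u\<in>color_class G \<sigma> c. \<forall>w\<in>color_class G \<sigma> c.
        u \<rightarrow>\<^sup>*\<^bsub>with_proj G \<restriction> color_class G \<sigma> c\<^esub> w)"

definition verts_of_colors :: "'a pair_pre_digraph \<Rightarrow> ('a \<Rightarrow> nat set) \<Rightarrow> nat set \<Rightarrow> 'a set" where
  "verts_of_colors G \<sigma> C = {v \<in> pverts G. \<sigma> v \<inter> C \<noteq> {}}"

definition color_separator ::
  "'a pair_pre_digraph \<Rightarrow> ('a \<Rightarrow> nat set) \<Rightarrow> nat \<Rightarrow> 'a \<Rightarrow> 'a \<Rightarrow> nat set \<Rightarrow> bool" where
  "color_separator G \<sigma> m s t S \<longleftrightarrow> S \<subseteq> {1..m} \<and>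
     \<not> (s \<rightarrow>\<^sup>*\<^bsub>with_proj G \<restriction> (pverts G - verts_of_colors G \<sigma> S)\<^esub> t)"

definition color_hitting_set ::
  "'a pair_pre_digraph \<Rightarrow> ('a \<Rightarrow> nat set) \<Rightarrow> nat \<Rightarrow> 'a \<Rightarrow> 'a \<Rightarrow> nat set \<Rightarrow> bool" where
  "color_hitting_set G \<sigma> m s t C \<longleftrightarrow>
     (\<forall>S. color_separator G \<sigma> m s t S \<longrightarrow> C \<inter> S \<noteq> {})"

end

theory Submission
  imports Defs
begin

text \<open>Enlarging a color separator only deletes more vertices, so the separators form an
  up-closed family of palettes.  Hence C meets every separator iff the complementary palette
  {1..m} - C is not a separator, i.e. iff s reaches t through vertices all of whose colors lie
  in C, and such a walk can be shortened to a path.\<close>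

lemma vpath_induce_subgraph_iff:
  assumes "X \<subseteq> verts G"
  shows "vpath p (G \<restriction> X) \<longleftrightarrow> vpath p G \<and> set p \<subseteq> X"
proof -
  have "set (vwalk_arcs p) \<subseteq> arcs_ends (G \<restriction> X) \<longleftrightarrow> set (vwalk_arcs p) \<subseteq> arcs_ends G"
    if "set p \<subseteq> X"
    using that by (fastforce simp: arcs_ends_conv elim: in_set_vwalk_arcsE)
  then show ?thesis
    using assms by (force simp: vpath_def vwalk_def)
qed

lemma (in wf_digraph) reachable_induce_subgraph_iff_vpath:
  assumes "X \<subseteq> verts G"
  shows "u \<rightarrow>\<^sup>*\<^bsub>G \<restriction> X\<^esub> v \<longleftrightarrow> (\<exists>p. vpath p G \<and> hd p = u \<and> last p = v \<and> set p \<subseteq> X)"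
proof -
  interpret GX: wf_digraph "G \<restriction> X" by (rule wellformed_induce_subgraph)
  show ?thesis
    using assms by (auto simp: GX.reachable_vpath_conv vpath_induce_subgraph_iff)
qed

lemma verts_of_colors_mono: "S \<subseteq> S' \<Longrightarrow> verts_of_colors G \<sigma> S \<subseteq> verts_of_colors G \<sigma> S'"
  by (auto simp: verts_of_colors_def)

lemma color_separator_mono:
  assumes "pair_wf_digraph G" and "color_separator G \<sigma> m s t S"
    and "S \<subseteq> S'" and "S' \<subseteq> {1..m}"
  shows "color_separator G \<sigma> m s t S'"
proof -
  interpret pair_wf_digraph G by fact
  have "pverts G - verts_of_colors G \<sigma> S' \<subseteq> pverts G - verts_of_colors G \<sigma> S"
    using verts_of_colors_mono[OF \<open>S \<subseteq> S'\<close>, of G \<sigma>] by blast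
  then show ?thesis
    using assms(2,4) by (auto simp: color_separator_def dest: reachable_induce_ss)
qed

lemma color_hitting_set_iff_complement_not_separator:
  assumes "pair_wf_digraph G"
  shows "color_hitting_set G \<sigma> m s t C \<longleftrightarrow> \<not> color_separator G \<sigma> m s t ({1..m} - C)"
proof
  assume "color_hitting_set G \<sigma> m s t C"
  then show "\<not> color_separator G \<sigma> m s t ({1..m} - C)"
    by (auto simp: color_hitting_set_def)
next
  assume complement: "\<not> color_separator G \<sigma> m s t ({1..m} - C)"
  have "C \<inter> S \<noteq> {}" if "color_separator G \<sigma> m s t S" for S
  proof
    assume "C \<inter> S = {}"
    with that have "S \<subseteq> {1..m} - C"
      by (auto simp: color_separator_def)
    with complement that show False
      using color_separator_mono[OF assms] by blast
  qed
  then show "color_hitting_set G \<sigma> m s t C"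
    by (simp add: color_hitting_set_def)
qed

lemma subset_avoiding_complement_colors_iff:
  assumes "\<forall>v\<in>pverts G. \<sigma> v \<subseteq> {1..m}" and "set p \<subseteq> pverts G"
  shows "set p \<subseteq> pverts G - verts_of_colors G \<sigma> ({1..m} - C) \<longleftrightarrow> colors_of_path \<sigma> p \<subseteq> C"
  using assms by (fastforce simp: verts_of_colors_def colors_of_path_def)

theorem lemma2p1:
  fixes G :: "'a pair_pre_digraph" and \<sigma> :: "'a \<Rightarrow> nat set" and m :: nat
    and s t :: 'a and C :: "nat set"
  assumes "pair_graph G"
    and "kuratowski_planar (with_proj G)"
    and "\<forall>v\<in>pverts G. \<sigma> v \<subseteq> {1..m}"
    and "color_connected G \<sigma> m"
    and "s \<in> pverts G" and "t \<in> pverts G"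
    and "s \<rightarrow>\<^sup>*\<^bsub>with_proj G\<^esub> t"
    and "C \<subseteq> {1..m}"
  shows "color_hitting_set G \<sigma> m s t C \<longleftrightarrow>
    (\<exists>p. vpath p (with_proj G) \<and> hd p = s \<and> last p = t \<and> colors_of_path \<sigma> p \<subseteq> C)"
proof -
  interpret pair_graph G by fact
  let ?X = "pverts G - verts_of_colors G \<sigma> ({1..m} - C)"
  have vpath_verts: "set p \<subseteq> pverts G" if "vpath p (with_proj G)" for p
    using that by (auto simp: vpath_def vwalk_def)
  have "color_hitting_set G \<sigma> m s t C \<longleftrightarrow> s \<rightarrow>\<^sup>*\<^bsub>with_proj G \<restriction> ?X\<^esub> t"
    using color_hitting_set_iff_complement_not_separator[OF pair_wf_digraph_axioms]
    by (simp add: color_separator_def)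
  also have "\<dots> \<longleftrightarrow> (\<exists>p. vpath p (with_proj G) \<and> hd p = s \<and> last p = t \<and> set p \<subseteq> ?X)"
    by (rule reachable_induce_subgraph_iff_vpath) blast
  also have "\<dots> \<longleftrightarrow>
      (\<exists>p. vpath p (with_proj G) \<and> hd p = s \<and> last p = t \<and> colors_of_path \<sigma> p \<subseteq> C)"
    using subset_avoiding_complement_colors_iff[OF assms(3)] vpath_verts by blast
  finally show ?thesis .
qed

end
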